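(* Let $H$ be the group defined below (with sets $A_\alpha=\{n\in\omega:\eta_\alpha(n)=1\}$), let $0\to T\to G\xrightarrow{\varphi}H\to 0$ be a balanced exact sequence with $T$ a torsion group (viewed as a subgroup of $G$), and fix elements $g_\alpha\in G$ with $\varphi(g_\alpha)=y_\alpha$ ($\alpha<\kappa$) and $\tilde x_n\in G$ with $\varphi(\tilde x_n)=x_n$ ($n\in\omega$). For $\alpha<\kappa$ and $t\in T$ let $R_{\alpha,t}=\{n\in A_\alpha : g_\alpha-t-\tilde x_n \text{ is not divisible by } p_n \text{ in } G\}$. Assume that for every $\alpha<\kappa$ there exists $t_\alpha\in T$ such that $R_{\alpha,t_\alpha}$ is finite. Then there is a homomorphism $\psi:H\to G$ with $\varphi\psi=\mathrm{id}_H$; hence the sequence splits.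
   Context: All groups are abelian. A pure subgroup $A$ of a torsion-free group $G$ is balanced if every coset $g+A$ contains an element $g+a$ ($a\in A$) whose characteristic is $\geq$ that of $g+x$ for all $x\in A$; an exact sequence $0\to A\to G\to C\to0$ is balanced exact if the image of $A$ is balanced in $G$. Setting: $\kappa$ is an uncountable cardinal, $\eta_\alpha:\omega\to 2$ ($\alpha<\kappa$) are the Cohen reals added by the forcing of finite partial functions $\kappa\times\omega\to 2$ (the lemma is considered in the generic extension). Fix primes $p_0<p_1<\cdots$; let $W=\bigoplus_{n\in\omega}\mathbb{Q}x_n\oplus\bigoplus_{\alpha<\kappa}\mathbb{Q}y_\alpha$ on independent elements, $F=\bigoplus_n\mathbb{Z}x_n\oplus\bigoplus_{\alpha<\kappa}\mathbb{Z}y_\alpha$, and $H$ the subgroup of $W$ generated by $F$ and all $p_n^{-1}(y_\alpha-x_n)$ with $\eta_\alpha(n)=1$. *)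

theory Defs
  imports Main "HOL-Library.Function_Algebras" "HOL-Library.Extended_Nat"
    "HOL-Computational_Algebra.Primes"
begin

fun nmul :: "nat \<Rightarrow> 'a::ab_group_add \<Rightarrow> 'a" where
  "nmul 0 x = 0"
| "nmul (Suc n) x = x + nmul n x"

definition divisible_by :: "nat \<Rightarrow> 'a::ab_group_add \<Rightarrow> bool" where
  "divisible_by n x \<longleftrightarrow> (\<exists>h. x = nmul n h)"

definition height :: "nat \<Rightarrow> 'a::ab_group_add \<Rightarrow> enat" where
  "height p x = Sup {enat k | k. divisible_by (p ^ k) x}"

definition char_le :: "'a::ab_group_add \<Rightarrow> 'a \<Rightarrow> bool" where
  "char_le x y \<longleftrightarrow> (\<forall>p::nat. prime p \<longrightarrow> height p x \<le> height p y)"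

definition pure_subgroup :: "'a::ab_group_add set \<Rightarrow> bool" where
  "pure_subgroup A \<longleftrightarrow>
     0 \<in> A \<and> (\<forall>a\<in>A. \<forall>b\<in>A. a + b \<in> A \<and> - a \<in> A) \<and>
     (\<forall>n>0. \<forall>a\<in>A. divisible_by n a \<longrightarrow> (\<exists>b\<in>A. a = nmul n b))"

definition balanced :: "'a::ab_group_add set \<Rightarrow> bool" where
  "balanced A \<longleftrightarrow> pure_subgroup A \<and>
     (\<forall>g. \<exists>a\<in>A. \<forall>x\<in>A. char_le (g + x) (g + a))"

text \<open>The rational vector space W, realised as functions on the index set
  nat + kappa (Inl n \<mapsto> x_n, Inr alpha \<mapsto> y_alpha), with pointwise operations.\<close>
definition xv :: "nat \<Rightarrow> (nat + 'k \<Rightarrow> rat)" where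
  "xv n = (\<lambda>i. if i = Inl n then 1 else 0)"

definition yv :: "'k \<Rightarrow> (nat + 'k \<Rightarrow> rat)" where
  "yv a = (\<lambda>i. if i = Inr a then 1 else 0)"

inductive_set Hgrp :: "('k \<Rightarrow> nat \<Rightarrow> bool) \<Rightarrow> (nat \<Rightarrow> nat) \<Rightarrow> (nat + 'k \<Rightarrow> rat) set"
  for \<eta> :: "'k \<Rightarrow> nat \<Rightarrow> bool" and p :: "nat \<Rightarrow> nat" where
  zero: "0 \<in> Hgrp \<eta> p"
| gen_x: "xv n \<in> Hgrp \<eta> p"
| gen_y: "yv a \<in> Hgrp \<eta> p"
| gen_frac: "\<eta> a n \<Longrightarrow> (\<lambda>i. (yv a i - xv n i) / of_nat (p n)) \<in> Hgrp \<eta> p"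
| add: "u \<in> Hgrp \<eta> p \<Longrightarrow> v \<in> Hgrp \<eta> p \<Longrightarrow> u + v \<in> Hgrp \<eta> p"
| neg: "u \<in> Hgrp \<eta> p \<Longrightarrow> - u \<in> Hgrp \<eta> p"

end

theory Submission
  imports Defs "HOL-Library.Poly_Mapping"
begin

text \<open>
  H is presented by the generators x_n, y_a and z_{a,n} = p_n^{-1}(y_a - x_n) (for eta_a(n) = 1)
  subject only to the relations p_n z_{a,n} = y_a - x_n: in an integer combination of generators
  that vanishes in W, each coefficient of z_{a,n} is divisible by p_n (look at the y_a-coordinate,
  where every other term is p_n-integral), so the relations reduce it to a vanishing combination
  of the independent x_n, y_a, i.e. to 0. Hence phi splits as soon as the x_n and y_a have lifts
  whose differences y_a - x_n are divisible by p_n in G whenever eta_a(n) = 1.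

  The lift g_a - t_a of y_a fails this only for finitely many n. For each of them the coset of
  the kernel T contains a p_n-divisible element; as T is torsion, the correcting element of T can
  be taken p_n-primary, hence divisible by every other p_m. Subtracting these finitely many
  corrections from g_a - t_a gives the required lift.
\<close>

lemma nmul_add_left: "nmul (m + n) x = nmul m x + nmul n x"
  by (induction m) (simp_all add: add.assoc)

lemma additive_nmul: "additive (nmul n)"
  by unfold_locales (induction n, simp_all add: algebra_simps)

lemma nmul_mult: "nmul (m * n) x = nmul m (nmul n x)"
  by (induction m) (simp_all add: nmul_add_left)

lemma nmul_0_right [simp]: "nmul n 0 = 0"
  by (rule additive.zero[OF additive_nmul])

lemma (in additive) nmul: "f (nmul n x) = nmul n (f x)"
  by (induction n) (simp_all add: add zero)

lemma nmul_eq_of_nat_mult: "nmul n (x :: 'a::ring_1) = of_nat n * x"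
  by (induction n) (simp_all add: algebra_simps)

lemma additive_apply: "additive (\<lambda>u. u j)"
  by unfold_locales simp

lemma nmul_fun_apply: "nmul n u i = nmul n (u i)"
  by (rule additive.nmul[OF additive_apply])

definition zmul :: "int \<Rightarrow> 'a::ab_group_add \<Rightarrow> 'a" where
  "zmul k x = nmul (nat k) x - nmul (nat (- k)) x"

lemma zmul_0_left [simp]: "zmul 0 x = 0"
  by (simp add: zmul_def)

lemma zmul_1 [simp]: "zmul 1 x = x"
  by (simp add: zmul_def)

lemma zmul_of_nat_diff: "zmul (int m - int n) x = nmul m x - nmul n x"
proof -
  have "nat (int m - int n) + n = nat (int n - int m) + m" by simp
  then have "nmul (nat (int m - int n)) x + nmul n x = nmul (nat (int n - int m)) x + nmul m x"
    by (metis nmul_add_left)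
  then show ?thesis unfolding zmul_def by (simp add: algebra_simps)
qed

lemma zmul_add_left: "zmul (k + l) x = zmul k x + zmul l x"
proof -
  have "k + l = int (nat k + nat l) - int (nat (- k) + nat (- l))" by simp
  then have "zmul (k + l) x = nmul (nat k + nat l) x - nmul (nat (- k) + nat (- l)) x"
    by (metis zmul_of_nat_diff)
  then show ?thesis by (simp add: zmul_def nmul_add_left)
qed

lemma additive_zmul: "additive (zmul k)"
proof
  fix x y :: 'a
  interpret pos: additive "nmul (nat k)" by (rule additive_nmul)
  interpret neg: additive "nmul (nat (- k))" by (rule additive_nmul)
  show "zmul k (x + y) = zmul k x + zmul k y"
    by (simp add: zmul_def pos.add neg.add)
qed

lemma zmul_0_right [simp]: "zmul k 0 = 0"
  by (rule additive.zero[OF additive_zmul])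

lemma zmul_of_nat_mult: "zmul (int m * k) x = nmul m (zmul k x)"
  by (induction m) (simp_all add: distrib_right zmul_add_left)

lemma (in additive) zmul: "f (zmul k x) = zmul k (f x)"
  by (simp add: zmul_def diff nmul)

lemma zmul_eq_of_int_mult: "zmul k (x :: 'a::ring_1) = of_int k * x"
  by (cases "k \<ge> 0") (simp_all add: zmul_def nmul_eq_of_nat_mult)

section \<open>Divisibility in torsion groups\<close>

lemma divisible_by_nmul: "divisible_by q (nmul q h)"
  unfolding divisible_by_def by blast

lemma divisible_by_0: "divisible_by q 0"
  by (metis divisible_by_nmul nmul_0_right)

lemma divisible_by_add: "divisible_by q x \<Longrightarrow> divisible_by q y \<Longrightarrow> divisible_by q (x + y)"
  unfolding divisible_by_def by (metis additive.add additive_nmul)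

lemma divisible_by_uminus: "divisible_by q x \<Longrightarrow> divisible_by q (- x)"
  unfolding divisible_by_def by (metis additive.minus additive_nmul)

lemma divisible_by_diff: "divisible_by q x \<Longrightarrow> divisible_by q y \<Longrightarrow> divisible_by q (x - y)"
  by (metis diff_conv_add_uminus divisible_by_add divisible_by_uminus)

lemma divisible_by_sum: "(\<And>i. i \<in> S \<Longrightarrow> divisible_by q (f i)) \<Longrightarrow> divisible_by q (sum f S)"
  by (induction S rule: infinite_finite_induct) (auto intro: divisible_by_0 divisible_by_add)

lemma divisible_by_if_annihilated_coprime:
  assumes "nmul M x = 0" and "coprime M q" and "q \<noteq> 0"
  shows "divisible_by q x"
proof -
  obtain u v where "q * u = M * v + gcd q M"
    using bezout_nat[OF \<open>q \<noteq> 0\<close>] by blast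
  then have "q * u = v * M + 1"
    using \<open>coprime M q\<close> by (simp add: coprime_commute)
  then have "nmul (q * u) x = x"
    using \<open>nmul M x = 0\<close> by (simp add: nmul_add_left nmul_mult)
  then show ?thesis
    by (metis divisible_by_nmul nmul_mult)
qed

lemma torsion_primary_part:
  assumes "nmul N d = 0" and "N > 0" and "prime P"
  obtains m where "divisible_by P (d - nmul m d)"
    and "\<And>q. prime q \<Longrightarrow> q \<noteq> P \<Longrightarrow> divisible_by q (nmul m d)"
proof -
  \<comment> \<open>With N = P^j k and P not dividing k, choose k u = 1 mod P; then k u d is the P-primary part of d.\<close>
  define j where "j = multiplicity P N"
  obtain k where N: "N = P ^ j * k" and "\<not> P dvd k"
  proof (rule multiplicity_decompose'[of N P])
    show "N \<noteq> 0" "\<not> is_unit P"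
      using assms by auto
  qed (simp add: j_def)
  then have "k \<noteq> 0" by (metis dvd_0_right)
  obtain u v where "k * u = P * v + gcd k P"
    using bezout_nat[OF \<open>k \<noteq> 0\<close>] by blast
  moreover have "coprime k P"
    using \<open>\<not> P dvd k\<close> \<open>prime P\<close> by (simp add: prime_imp_coprime coprime_commute)
  ultimately have ku: "k * u = P * v + 1" by simp
  have "d - nmul (k * u) d = nmul P (- nmul v d)"
    unfolding ku by (simp add: nmul_add_left nmul_mult additive.minus[OF additive_nmul])
  then have "divisible_by P (d - nmul (k * u) d)"
    by (metis divisible_by_nmul)
  moreover have "divisible_by q (nmul (k * u) d)" if "prime q" "q \<noteq> P" for q
  proof (rule divisible_by_if_annihilated_coprime)
    have "P ^ j * (k * u) = u * N"
      using N by simp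
    then have "nmul (P ^ j) (nmul (k * u) d) = nmul u (nmul N d)"
      by (metis nmul_mult)
    then show "nmul (P ^ j) (nmul (k * u) d) = 0"
      using \<open>nmul N d = 0\<close> by (simp add:)
    show "coprime (P ^ j) q"
      using that \<open>prime P\<close> by (simp add: primes_coprime)
    show "q \<noteq> 0"
      using \<open>prime q\<close> by auto
  qed
  ultimately show ?thesis using that by blast
qed

lemma torsion_correction:
  fixes T :: "'g::ab_group_add set" and P :: "nat \<Rightarrow> nat" and y :: "nat \<Rightarrow> 'g"
  assumes "0 \<in> T" and add_closed: "\<And>s t. s \<in> T \<Longrightarrow> t \<in> T \<Longrightarrow> s + t \<in> T"
    and torsion: "\<And>t. t \<in> T \<Longrightarrow> \<exists>N>0. nmul N t = 0"
    and primes: "\<And>n. prime (P n)" and "inj P"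
    and coset: "\<And>n. n \<in> A \<Longrightarrow> \<exists>t\<in>T. divisible_by (P n) (y n + t)"
    and finite_bad: "finite {n \<in> A. \<not> divisible_by (P n) (y n)}"
  shows "\<exists>t\<in>T. \<forall>n\<in>A. divisible_by (P n) (y n + t)"
proof -
  have "\<exists>e\<in>T. divisible_by (P n) (y n + e) \<and> (\<forall>m. m \<noteq> n \<longrightarrow> divisible_by (P m) e)"
    if "n \<in> A" for n
  proof -
    obtain t where "t \<in> T" and t: "divisible_by (P n) (y n + t)"
      using coset \<open>n \<in> A\<close> by blast
    then obtain N where "N > 0" "nmul N t = 0"
      using torsion by blast
    then obtain k where k: "divisible_by (P n) (t - nmul k t)"
      and other: "\<And>q. prime q \<Longrightarrow> q \<noteq> P n \<Longrightarrow> divisible_by q (nmul k t)"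
      using torsion_primary_part primes by metis
    have "nmul k t \<in> T"
      by (induction k) (simp_all add: \<open>0 \<in> T\<close> \<open>t \<in> T\<close> add_closed)
    moreover have "divisible_by (P n) (y n + nmul k t)"
      using divisible_by_diff[OF t k] by (simp add: algebra_simps)
    moreover have "divisible_by (P m) (nmul k t)" if "m \<noteq> n" for m
      using other[OF primes] \<open>inj P\<close> that by (metis injD)
    ultimately show ?thesis by blast
  qed
  then obtain e where e_mem: "\<And>n. n \<in> A \<Longrightarrow> e n \<in> T"
    and e_div: "\<And>n. n \<in> A \<Longrightarrow> divisible_by (P n) (y n + e n)"
    and e_other: "\<And>n m. n \<in> A \<Longrightarrow> m \<noteq> n \<Longrightarrow> divisible_by (P m) (e n)"
    by metis
  define R where "R = {n \<in> A. \<not> divisible_by (P n) (y n)}"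
  have "sum e S \<in> T" if "finite S" "S \<subseteq> A" for S
    using that by (induction S) (simp_all add: \<open>0 \<in> T\<close> add_closed e_mem)
  then have "sum e R \<in> T"
    using finite_bad unfolding R_def by blast
  moreover have "divisible_by (P n) (y n + sum e R)" if "n \<in> A" for n
  proof -
    have rest: "divisible_by (P n) (sum e (R - {n}))"
      by (rule divisible_by_sum) (use e_other R_def in auto)
    show ?thesis
    proof (cases "n \<in> R")
      case True
      then have "y n + sum e R = (y n + e n) + sum e (R - {n})"
        using finite_bad sum.remove[of R n e] unfolding R_def by (simp add: algebra_simps)
      then show ?thesis
        using divisible_by_add[OF e_div[OF \<open>n \<in> A\<close>] rest] by argo
    next
      case False
      then show ?thesis
        using divisible_by_add[OF _ rest, of "y n"] \<open>n \<in> A\<close> unfolding R_def by auto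
    qed
  qed
  ultimately show ?thesis by blast
qed

lemma kernel_coset_divisible:
  assumes "additive \<phi>" and "nmul P (\<phi> z) = \<phi> y"
  shows "\<exists>t. \<phi> t = 0 \<and> divisible_by P (y + t)"
proof -
  interpret \<phi>: additive \<phi> by fact
  have "\<phi> (nmul P z - y) = 0"
    using assms(2) by (simp add: \<phi>.diff \<phi>.nmul)
  moreover have "y + (nmul P z - y) = nmul P z"
    by simp
  ultimately show ?thesis
    by (metis divisible_by_nmul)
qed

definition frag_eval :: "('i \<Rightarrow> 'a::ab_group_add) \<Rightarrow> ('i \<Rightarrow>\<^sub>0 int) \<Rightarrow> 'a" where
  "frag_eval l c = (\<Sum>i\<in>Poly_Mapping.keys c. zmul (Poly_Mapping.lookup c i) (l i))"

lemma frag_eval_superset: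
  assumes "finite S" and "Poly_Mapping.keys c \<subseteq> S"
  shows "frag_eval l c = (\<Sum>i\<in>S. zmul (Poly_Mapping.lookup c i) (l i))"
  unfolding frag_eval_def by (rule sum.mono_neutral_left) (use assms in \<open>auto simp: in_keys_iff\<close>)

lemma additive_frag_eval:
  fixes l :: "'i \<Rightarrow> 'a::ab_group_add"
  shows "additive (frag_eval l)"
proof
  fix c d :: "'i \<Rightarrow>\<^sub>0 int"
  let ?S = "Poly_Mapping.keys c \<union> Poly_Mapping.keys d"
  let ?eval = "\<lambda>c. \<Sum>i\<in>?S. zmul (Poly_Mapping.lookup c i) (l i)"
  have "frag_eval l (c + d) = ?eval (c + d)"
    by (intro frag_eval_superset keys_add) simp
  also have "\<dots> = ?eval c + ?eval d"
    by (simp add: lookup_add zmul_add_left sum.distrib)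
  also have "\<dots> = frag_eval l c + frag_eval l d"
    by (simp add: frag_eval_superset[of ?S])
  finally show "frag_eval l (c + d) = frag_eval l c + frag_eval l d" .
qed

lemma frag_eval_single: "frag_eval l (Poly_Mapping.single i k) = zmul k (l i)"
  by (subst frag_eval_superset[of "{i}"]) auto

lemma frag_eval_cong:
  "(\<And>i. i \<in> Poly_Mapping.keys c \<Longrightarrow> l i = l' i) \<Longrightarrow> frag_eval l c = frag_eval l' c"
  by (simp add: frag_eval_def)

lemma (in additive) frag_eval: "f (frag_eval l c) = frag_eval (\<lambda>i. f (l i)) c"
  by (simp add: frag_eval_def sum zmul)

lemma frag_eval_apply: "frag_eval l c j = frag_eval (\<lambda>i. l i j) c"
  by (rule additive.frag_eval[OF additive_apply])

lemma frag_eval_eq_lookup: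
  fixes l :: "'i \<Rightarrow> 'a::ring_1"
  assumes "l j = 1" and "\<And>i. i \<in> Poly_Mapping.keys c \<Longrightarrow> i \<noteq> j \<Longrightarrow> l i = 0"
  shows "frag_eval l c = of_int (Poly_Mapping.lookup c j)"
proof -
  have "frag_eval l c = (\<Sum>i\<in>insert j (Poly_Mapping.keys c). zmul (Poly_Mapping.lookup c i) (l i))"
    by (rule frag_eval_superset) auto
  also have "\<dots> = (\<Sum>i\<in>{j}. zmul (Poly_Mapping.lookup c i) (l i))"
    by (rule sum.mono_neutral_right) (auto simp: assms(2))
  finally show ?thesis
    by (simp add: assms(1) zmul_eq_of_int_mult)
qed

section \<open>Rationals with denominator prime to P\<close>

definition p_integral :: "nat \<Rightarrow> rat \<Rightarrow> bool" where
  "p_integral P q \<longleftrightarrow> (\<exists>a b. b \<noteq> 0 \<and> coprime b (int P) \<and> q = of_int a / of_int b)"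

lemma p_integral_of_int: "p_integral P (of_int a)"
  unfolding p_integral_def by (intro exI[of _ a] exI[of _ 1]) simp

lemma p_integral_add:
  assumes "p_integral P q" and "p_integral P r"
  shows "p_integral P (q + r)"
proof -
  obtain a b where "b \<noteq> 0" "coprime b (int P)" "q = of_int a / of_int b"
    using assms(1) unfolding p_integral_def by blast
  moreover obtain a' b' where "b' \<noteq> 0" "coprime b' (int P)" "r = of_int a' / of_int b'"
    using assms(2) unfolding p_integral_def by blast
  ultimately have "b * b' \<noteq> 0" "coprime (b * b') (int P)"
    and "q + r = of_int (a * b' + a' * b) / of_int (b * b')"
    by (simp_all add: field_simps)
  then show ?thesis
    unfolding p_integral_def by blast
qed

lemma p_integral_mult:
  assumes "p_integral P q" and "p_integral P r"
  shows "p_integral P (q * r)"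
proof -
  obtain a b where "b \<noteq> 0" "coprime b (int P)" "q = of_int a / of_int b"
    using assms(1) unfolding p_integral_def by blast
  moreover obtain a' b' where "b' \<noteq> 0" "coprime b' (int P)" "r = of_int a' / of_int b'"
    using assms(2) unfolding p_integral_def by blast
  ultimately have "b * b' \<noteq> 0" "coprime (b * b') (int P)"
    and "q * r = of_int (a * a') / of_int (b * b')"
    by simp_all
  then show ?thesis
    unfolding p_integral_def by blast
qed

lemma p_integral_uminus: "p_integral P q \<Longrightarrow> p_integral P (- q)"
  using p_integral_mult[OF p_integral_of_int[of P "- 1"]] by simp

lemma p_integral_sum: "(\<And>i. i \<in> S \<Longrightarrow> p_integral P (f i)) \<Longrightarrow> p_integral P (sum f S)"
  by (induction S rule: infinite_finite_induct)
    (auto intro: p_integral_add p_integral_of_int[of P 0, simplified])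

lemma p_integral_inverse: "m \<noteq> 0 \<Longrightarrow> coprime m P \<Longrightarrow> p_integral P (1 / of_nat m)"
  unfolding p_integral_def by (intro exI[of _ 1] exI[of _ "int m"]) simp

lemma dvd_if_p_integral_divide:
  assumes "prime P" and "p_integral P (of_int c / of_nat P)"
  shows "int P dvd c"
proof -
  obtain a b where "b \<noteq> 0" and "coprime b (int P)" and "of_int c / of_nat P = (of_int a / of_int b :: rat)"
    using assms(2) unfolding p_integral_def by blast
  then have "(of_int (c * b) :: rat) = of_int (a * int P)"
    using \<open>prime P\<close> by (simp add: field_simps)
  then have "c * b = a * int P"
    by (simp only: of_int_eq_iff)
  then have "int P dvd c * b" by simp
  with \<open>coprime b (int P)\<close> show ?thesis
    by (simp add: coprime_commute coprime_dvd_mult_left_iff)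
qed

section \<open>A presentation of H\<close>

datatype 'k hgen = GenX nat | GenY 'k | GenZ 'k nat

fun hgen_val :: "(nat \<Rightarrow> nat) \<Rightarrow> 'k hgen \<Rightarrow> (nat + 'k \<Rightarrow> rat)" where
  "hgen_val p (GenX n) = xv n"
| "hgen_val p (GenY a) = yv a"
| "hgen_val p (GenZ a n) = (\<lambda>i. (yv a i - xv n i) / of_nat (p n))"

definition hgens :: "('k \<Rightarrow> nat \<Rightarrow> bool) \<Rightarrow> 'k hgen set" where
  "hgens \<eta> = {i. \<forall>a n. i = GenZ a n \<longrightarrow> \<eta> a n}"

lemma hgens_simps [simp]:
  "GenX n \<in> hgens \<eta>" "GenY a \<in> hgens \<eta>" "GenZ a n \<in> hgens \<eta> \<longleftrightarrow> \<eta> a n"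
  by (simp_all add: hgens_def)

definition hrel :: "(nat \<Rightarrow> nat) \<Rightarrow> 'k \<Rightarrow> nat \<Rightarrow> int \<Rightarrow> 'k hgen \<Rightarrow>\<^sub>0 int" where
  "hrel p a n k = Poly_Mapping.single (GenY a) k - Poly_Mapping.single (GenX n) k
     - Poly_Mapping.single (GenZ a n) (int (p n) * k)"

lemma frag_eval_hrel:
  assumes "nmul (p n) (l (GenZ a n)) = l (GenY a) - l (GenX n)"
  shows "frag_eval l (hrel p a n k) = 0"
proof -
  interpret eval: additive "frag_eval l" by (rule additive_frag_eval)
  interpret zmul: additive "zmul k" by (rule additive_zmul)
  have "frag_eval l (hrel p a n k) = zmul k (l (GenY a)) - zmul k (l (GenX n)) - zmul k (nmul (p n) (l (GenZ a n)))"
    by (simp add: hrel_def eval.diff frag_eval_single zmul_of_nat_mult zmul.nmul)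
  then show ?thesis
    by (simp add: assms zmul.diff)
qed

lemma keys_hrel: "Poly_Mapping.keys (hrel p a n k) \<subseteq> {GenY a, GenX n, GenZ a n}"
  unfolding hrel_def by (auto simp: in_keys_iff lookup_minus lookup_single)

lemma lookup_hrel_GenZ:
  "Poly_Mapping.lookup (hrel p a n k) (GenZ b m) = (if (b, m) = (a, n) then - int (p n) * k else 0)"
  by (auto simp: hrel_def lookup_minus lookup_single when_def)

lemma hgen_val_rel: "p n \<noteq> 0 \<Longrightarrow> nmul (p n) (hgen_val p (GenZ a n)) = hgen_val p (GenY a) - hgen_val p (GenX n)"
  by (simp add: fun_eq_iff nmul_fun_apply nmul_eq_of_nat_mult)

lemma eq_hgen_val_GenZ_if_nmul:
  assumes "p n \<noteq> 0" and "nmul (p n) u = yv a - xv n"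
  shows "u = hgen_val p (GenZ a n)"
proof
  fix i
  have "of_nat (p n) * u i = yv a i - xv n i"
    using fun_cong[OF assms(2), of i] by (simp add: nmul_fun_apply nmul_eq_of_nat_mult)
  then show "u i = hgen_val p (GenZ a n) i"
    using assms(1) by (simp add: field_simps)
qed

lemma p_integral_hgen_val_Inr:
  assumes primes: "\<And>n. prime (p n)" and "inj p" and "i \<noteq> GenZ a n"
  shows "p_integral (p n) (hgen_val p i (Inr a))"
proof (cases i)
  case (GenZ b m)
  show ?thesis
  proof (cases "b = a")
    case True
    with GenZ \<open>i \<noteq> GenZ a n\<close> have "p m \<noteq> p n"
      using \<open>inj p\<close> by (auto dest: injD)
    then have "coprime (p m) (p n)"
      using primes primes_coprime by blast
    then show ?thesis
      using GenZ True primes[of m] by (simp add: xv_def yv_def p_integral_inverse prime_gt_0_nat)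
  qed (use GenZ in \<open>simp add: xv_def yv_def p_integral_of_int[of _ 0, simplified]\<close>)
qed (auto simp: xv_def yv_def intro: p_integral_of_int[of _ 0, simplified] p_integral_of_int[of _ 1, simplified])

lemma GenZ_coeff_dvd:
  assumes primes: "\<And>n. prime (p n)" and "inj p" and "frag_eval (hgen_val p) c = 0"
  shows "int (p n) dvd Poly_Mapping.lookup c (GenZ a n)"
proof -
  \<comment> \<open>In the y_a-coordinate every generator other than GenZ a n contributes a p_n-integral rational.\<close>
  let ?z = "GenZ a n"
  let ?v = "\<lambda>i. of_int (Poly_Mapping.lookup c i) * hgen_val p i (Inr a)"
  have "0 = frag_eval (\<lambda>i. hgen_val p i (Inr a)) c"
    using assms(3) frag_eval_apply[of "hgen_val p" c "Inr a"] by simp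
  also have "\<dots> = (\<Sum>i\<in>insert ?z (Poly_Mapping.keys c). ?v i)"
    by (subst frag_eval_superset[of "insert ?z (Poly_Mapping.keys c)"]) (auto simp: zmul_eq_of_int_mult)
  also have "\<dots> = ?v ?z + (\<Sum>i\<in>Poly_Mapping.keys c - {?z}. ?v i)"
    by (simp add: sum.insert_remove)
  finally have "?v ?z = - (\<Sum>i\<in>Poly_Mapping.keys c - {?z}. ?v i)"
    by (simp add: eq_neg_iff_add_eq_0)
  moreover have "p_integral (p n) (\<Sum>i\<in>Poly_Mapping.keys c - {?z}. ?v i)"
    using p_integral_hgen_val_Inr[OF primes \<open>inj p\<close>]
    by (intro p_integral_sum p_integral_mult p_integral_of_int) auto
  ultimately have "p_integral (p n) (of_int (Poly_Mapping.lookup c ?z) / of_nat (p n))"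
    by (simp add: p_integral_uminus xv_def yv_def)
  then show ?thesis
    using dvd_if_p_integral_divide primes by blast
qed

lemma eq_0_if_frag_eval_hgen_val_eq_0:
  assumes no_Z: "\<And>a n. GenZ a n \<notin> Poly_Mapping.keys c" and "frag_eval (hgen_val p) c = 0"
  shows "c = 0"
proof (rule poly_mapping_eqI)
  have coeff: "Poly_Mapping.lookup c j = 0" if "hgen_val p j k = 1"
    and "\<And>i. i \<in> Poly_Mapping.keys c \<Longrightarrow> i \<noteq> j \<Longrightarrow> hgen_val p i k = 0" for j k
  proof -
    have "of_int (Poly_Mapping.lookup c j) = frag_eval (\<lambda>i. hgen_val p i k) c"
      using that by (simp add: frag_eval_eq_lookup)
    also have "\<dots> = 0"
      using assms(2) by (simp flip: frag_eval_apply)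
    finally show ?thesis by simp
  qed
  fix i
  show "Poly_Mapping.lookup c i = Poly_Mapping.lookup 0 i"
  proof (cases i)
    case (GenX n)
    have "hgen_val p i' (Inl n) = 0" if "i' \<in> Poly_Mapping.keys c" "i' \<noteq> GenX n" for i'
      using that no_Z by (cases i') (auto simp: xv_def yv_def)
    then show ?thesis
      using coeff[of i "Inl n"] GenX by (simp add: xv_def)
  next
    case (GenY a)
    have "hgen_val p i' (Inr a) = 0" if "i' \<in> Poly_Mapping.keys c" "i' \<noteq> GenY a" for i'
      using that no_Z by (cases i') (auto simp: xv_def yv_def)
    then show ?thesis
      using coeff[of i "Inr a"] GenY by (simp add: yv_def)
  qed (use no_Z in \<open>simp add: in_keys_iff\<close>)
qed

lemma frag_eval_eq_0_if_relations:
  fixes l :: "'k hgen \<Rightarrow> 'g::ab_group_add"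
  assumes primes: "\<And>n. prime (p n)" and "inj p"
    and rel: "\<And>a n. \<eta> a n \<Longrightarrow> nmul (p n) (l (GenZ a n)) = l (GenY a) - l (GenX n)"
    and "Poly_Mapping.keys c \<subseteq> hgens \<eta>" and "frag_eval (hgen_val p) c = 0"
  shows "frag_eval l c = 0"
proof -
  interpret eval_l: additive "frag_eval l" by (rule additive_frag_eval)
  interpret eval_W: additive "frag_eval (hgen_val p)" by (rule additive_frag_eval)
  let ?zkeys = "\<lambda>c. {(a, n). GenZ a n \<in> Poly_Mapping.keys c}"
  have "finite (?zkeys c)"
    using finite_vimageI[of "Poly_Mapping.keys c" "\<lambda>(a, n). GenZ a n"]
    by (simp add: inj_on_def vimage_def case_prod_unfold)
  \<comment> \<open>Induction on the z-generators in c: adding a multiple of a relation cancels one of them.\<close>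
  moreover have "frag_eval l c = 0"
    if "?zkeys c = Z" "finite Z" "Poly_Mapping.keys c \<subseteq> hgens \<eta>" "frag_eval (hgen_val p) c = 0"
    for Z c
    using that(2,1,3,4)
  proof (induction Z arbitrary: c rule: finite_induct)
    case empty
    then have "c = 0"
      by (intro eq_0_if_frag_eval_hgen_val_eq_0[of c p]) auto
    then show ?case
      by (simp add: eval_l.zero)
  next
    case (insert z Z)
    obtain a n where z: "z = (a, n)" by fastforce
    then have "GenZ a n \<in> Poly_Mapping.keys c"
      using insert.prems(1) by blast
    then have "\<eta> a n"
      using insert.prems(2) by auto
    obtain k where k: "Poly_Mapping.lookup c (GenZ a n) = int (p n) * k"
      using GenZ_coeff_dvd[OF primes \<open>inj p\<close> insert.prems(3)] by blast
    define c' where "c' = c + hrel p a n k"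
    have "Poly_Mapping.keys (hrel p a n k) \<subseteq> hgens \<eta>"
      using keys_hrel[of p a n k] \<open>\<eta> a n\<close> by auto
    then have "Poly_Mapping.keys c' \<subseteq> hgens \<eta>"
      using insert.prems(2) keys_add[of c "hrel p a n k"] unfolding c'_def by blast
    moreover have "?zkeys c' = Z"
      using insert.prems(1) insert.hyps(2) k z
      by (auto simp: c'_def in_keys_iff lookup_add lookup_hrel_GenZ split: if_splits)
    moreover have "frag_eval (hgen_val p) (hrel p a n k) = 0"
      using primes[of n] by (intro frag_eval_hrel hgen_val_rel) auto
    then have "frag_eval (hgen_val p) c' = 0"
      using insert.prems(3) by (simp only: c'_def eval_W.add add_0)
    ultimately have "frag_eval l c' = 0"
      using insert.IH by blast
    then show ?case
      by (simp add: c'_def eval_l.add frag_eval_hrel rel[OF \<open>\<eta> a n\<close>])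
  qed
  ultimately show ?thesis
    using assms(4,5) by blast
qed

lemma Hgrp_subset_frag_eval_image:
  "Hgrp \<eta> p \<subseteq> frag_eval (hgen_val p) ` {c. Poly_Mapping.keys c \<subseteq> hgens \<eta>}"
proof
  interpret eval_W: additive "frag_eval (hgen_val p)" by (rule additive_frag_eval)
  have gen: "hgen_val p i \<in> frag_eval (hgen_val p) ` {c. Poly_Mapping.keys c \<subseteq> hgens \<eta>}"
    if "i \<in> hgens \<eta>" for i
    using that by (intro image_eqI[of _ _ "Poly_Mapping.single i 1"]) (simp_all add: frag_eval_single)
  fix u assume "u \<in> Hgrp \<eta> p"
  then show "u \<in> frag_eval (hgen_val p) ` {c. Poly_Mapping.keys c \<subseteq> hgens \<eta>}"
  proof (induction rule: Hgrp.induct)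
    case zero
    show ?case by (intro image_eqI[of _ _ 0]) (simp_all add: eval_W.zero)
  next
    case (gen_x n)
    show ?case using gen[of "GenX n"] by simp
  next
    case (gen_y a)
    show ?case using gen[of "GenY a"] by simp
  next
    case (gen_frac a n)
    show ?case using gen[of "GenZ a n"] gen_frac by simp
  next
    case (add u v)
    then obtain c d where "Poly_Mapping.keys c \<subseteq> hgens \<eta>" "Poly_Mapping.keys d \<subseteq> hgens \<eta>"
      and "u = frag_eval (hgen_val p) c" "v = frag_eval (hgen_val p) d"
      by blast
    then show ?case
      using keys_add[of c d] by (intro image_eqI[of _ _ "c + d"]) (auto simp: eval_W.add)
  next
    case (neg u)
    then obtain c where "Poly_Mapping.keys c \<subseteq> hgens \<eta>" "u = frag_eval (hgen_val p) c"
      by blast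
    then show ?case
      by (intro image_eqI[of _ _ "- c"]) (auto simp: eval_W.minus)
  qed
qed

section \<open>The splitting\<close>

lemma Hgrp_section_if_relations:
  fixes \<phi> :: "'g::ab_group_add \<Rightarrow> (nat + 'k \<Rightarrow> rat)" and l :: "'k hgen \<Rightarrow> 'g"
  assumes primes: "\<And>n. prime (p n)" and "inj p" and "additive \<phi>"
    and lift: "\<And>i. i \<in> hgens \<eta> \<Longrightarrow> \<phi> (l i) = hgen_val p i"
    and rel: "\<And>a n. \<eta> a n \<Longrightarrow> nmul (p n) (l (GenZ a n)) = l (GenY a) - l (GenX n)"
  shows "\<exists>\<psi>. (\<forall>u\<in>Hgrp \<eta> p. \<forall>v\<in>Hgrp \<eta> p. \<psi> (u + v) = \<psi> u + \<psi> v) \<and>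
             (\<forall>u\<in>Hgrp \<eta> p. \<phi> (\<psi> u) = u)"
proof -
  interpret eval_l: additive "frag_eval l" by (rule additive_frag_eval)
  interpret eval_W: additive "frag_eval (hgen_val p)" by (rule additive_frag_eval)
  define rep where "rep u = (SOME c. Poly_Mapping.keys c \<subseteq> hgens \<eta> \<and> frag_eval (hgen_val p) c = u)"
    for u
  have rep: "Poly_Mapping.keys (rep u) \<subseteq> hgens \<eta> \<and> frag_eval (hgen_val p) (rep u) = u"
    if "u \<in> Hgrp \<eta> p" for u
  proof -
    have "\<exists>c. Poly_Mapping.keys c \<subseteq> hgens \<eta> \<and> frag_eval (hgen_val p) c = u"
      using Hgrp_subset_frag_eval_image that by blast
    then show ?thesis
      unfolding rep_def by (rule someI_ex)
  qed
  have "frag_eval l (rep (u + v)) = frag_eval l (rep u) + frag_eval l (rep v)"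
    if "u \<in> Hgrp \<eta> p" "v \<in> Hgrp \<eta> p" for u v
  proof -
    have "u + v \<in> Hgrp \<eta> p"
      using that by (rule Hgrp.add)
    define d where "d = rep u + rep v - rep (u + v)"
    have "Poly_Mapping.keys d \<subseteq> hgens \<eta>"
      using rep that \<open>u + v \<in> Hgrp \<eta> p\<close> keys_add[of "rep u" "rep v"]
        keys_diff[of "rep u + rep v" "rep (u + v)"]
      unfolding d_def by blast
    moreover have "frag_eval (hgen_val p) d = 0"
      using rep that \<open>u + v \<in> Hgrp \<eta> p\<close> by (simp add: d_def eval_W.add eval_W.diff)
    ultimately have "frag_eval l d = 0"
      using frag_eval_eq_0_if_relations[OF primes \<open>inj p\<close>, of \<eta> l] rel by blast
    then show ?thesis
      by (simp add: d_def eval_l.add eval_l.diff)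
  qed
  moreover have "\<phi> (frag_eval l (rep u)) = u" if "u \<in> Hgrp \<eta> p" for u
  proof -
    have "\<phi> (frag_eval l (rep u)) = frag_eval (\<lambda>i. \<phi> (l i)) (rep u)"
      by (rule additive.frag_eval[OF \<open>additive \<phi>\<close>])
    also have "\<dots> = frag_eval (hgen_val p) (rep u)"
      using rep[OF that] lift by (intro frag_eval_cong) blast
    finally show ?thesis
      using rep[OF that] by simp
  qed
  ultimately show ?thesis
    by (intro exI[of _ "\<lambda>u. frag_eval l (rep u)"]) simp
qed

lemma Hgrp_splits_if_divisible:
  fixes \<phi> :: "'g::ab_group_add \<Rightarrow> (nat + 'k \<Rightarrow> rat)"
  assumes primes: "\<And>n. prime (p n)" and "inj p" and "additive \<phi>"
    and lift_x: "\<And>n. \<phi> (x n) = xv n" and lift_y: "\<And>a. \<phi> (y a) = yv a"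
    and div: "\<And>a n. \<eta> a n \<Longrightarrow> divisible_by (p n) (y a - x n)"
  shows "\<exists>\<psi>. (\<forall>u\<in>Hgrp \<eta> p. \<forall>v\<in>Hgrp \<eta> p. \<psi> (u + v) = \<psi> u + \<psi> v) \<and>
             (\<forall>u\<in>Hgrp \<eta> p. \<phi> (\<psi> u) = u)"
proof -
  interpret \<phi>: additive \<phi> by fact
  obtain z where z: "\<And>a n. \<eta> a n \<Longrightarrow> y a - x n = nmul (p n) (z a n)"
    using div unfolding divisible_by_def by metis
  let ?l = "case_hgen x y z"
  show ?thesis
  proof (rule Hgrp_section_if_relations[OF primes \<open>inj p\<close> \<open>additive \<phi>\<close>])
    show "nmul (p n) (?l (GenZ a n)) = ?l (GenY a) - ?l (GenX n)" if "\<eta> a n" for a n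
      using z[OF that] by simp
    show "\<phi> (?l i) = hgen_val p i" if "i \<in> hgens \<eta>" for i
    proof (cases i)
      case (GenZ a n)
      then have "nmul (p n) (\<phi> (z a n)) = \<phi> (y a - x n)"
        using that z[of a n] by (simp add: \<phi>.nmul)
      also have "\<dots> = yv a - xv n"
        by (simp add: \<phi>.diff lift_x lift_y)
      finally have "nmul (p n) (\<phi> (z a n)) = yv a - xv n" .
      then have "\<phi> (z a n) = hgen_val p (GenZ a n)"
        using primes[of n] by (intro eq_hgen_val_GenZ_if_nmul) auto
      then show ?thesis
        using GenZ by simp
    qed (simp_all add: lift_x lift_y)
  qed
qed

lemma exists_divisible_lift:
  fixes \<phi> :: "'g::ab_group_add \<Rightarrow> (nat + 'k \<Rightarrow> rat)"
  assumes "additive \<phi>" and kernel: "{t. \<phi> t = 0} = T"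
    and torsion: "\<forall>t\<in>T. \<exists>N>0. nmul N t = 0"
    and primes: "\<And>n. prime (p n)" and "inj p"
    and frac: "\<And>n. \<eta> a n \<Longrightarrow> hgen_val p (GenZ a n) \<in> range \<phi>"
    and lift_y: "\<phi> y = yv a" and lift_x: "\<And>n. \<phi> (x n) = xv n"
    and "t0 \<in> T" and finite_bad: "finite {n. \<eta> a n \<and> \<not> divisible_by (p n) (y - t0 - x n)}"
  shows "\<exists>t\<in>T. \<forall>n. \<eta> a n \<longrightarrow> divisible_by (p n) (y - t - x n)"
proof -
  interpret \<phi>: additive \<phi> by fact
  have T_iff: "t \<in> T \<longleftrightarrow> \<phi> t = 0" for t
    using kernel by blast
  have "\<exists>t\<in>T. \<forall>n\<in>{n. \<eta> a n}. divisible_by (p n) ((y - t0 - x n) + t)"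
  proof (rule torsion_correction[OF _ _ _ primes \<open>inj p\<close>])
    show "0 \<in> T" "\<And>s t. s \<in> T \<Longrightarrow> t \<in> T \<Longrightarrow> s + t \<in> T"
      by (simp_all add: T_iff \<phi>.zero \<phi>.add)
    show "\<And>t. t \<in> T \<Longrightarrow> \<exists>N>0. nmul N t = 0"
      using torsion by blast
    show "\<exists>t\<in>T. divisible_by (p n) ((y - t0 - x n) + t)" if n: "n \<in> {n. \<eta> a n}" for n
    proof -
      obtain z where "\<phi> z = hgen_val p (GenZ a n)"
        using frac n by (metis mem_Collect_eq rangeE)
      then have "nmul (p n) (\<phi> z) = \<phi> (y - t0 - x n)"
        using hgen_val_rel[of p n a] primes[of n] \<open>t0 \<in> T\<close>
        by (simp add: T_iff \<phi>.diff lift_x lift_y prime_gt_0_nat)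
      then obtain t where "\<phi> t = 0" and "divisible_by (p n) ((y - t0 - x n) + t)"
        using kernel_coset_divisible[OF \<open>additive \<phi>\<close>] by blast
      then show ?thesis
        using T_iff by blast
    qed
  qed (use finite_bad in simp)
  then obtain t where "t \<in> T" and t: "\<And>n. \<eta> a n \<Longrightarrow> divisible_by (p n) ((y - t0 - x n) + t)"
    by blast
  have "t0 - t \<in> T"
    using \<open>t0 \<in> T\<close> \<open>t \<in> T\<close> by (simp add: T_iff \<phi>.diff)
  moreover have "y - (t0 - t) - x n = (y - t0 - x n) + t" for n
    by (simp add: algebra_simps)
  ultimately show ?thesis
    using t by metis
qed

theorem lemma4p6:
  fixes \<eta> :: "'k \<Rightarrow> nat \<Rightarrow> bool"
    and p :: "nat \<Rightarrow> nat"
    and T :: "'g::ab_group_add set"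
    and \<phi> :: "'g \<Rightarrow> (nat + 'k \<Rightarrow> rat)"
    and g :: "'k \<Rightarrow> 'g"
    and xt :: "nat \<Rightarrow> 'g"
  assumes kappa: "uncountable (UNIV :: 'k set)"
    and primes: "\<And>n. prime (p n)" and incr: "strict_mono p"
    and hom: "\<And>a b. \<phi> (a + b) = \<phi> a + \<phi> b"
    and onto: "range \<phi> = Hgrp \<eta> p"
    and kernel: "{a. \<phi> a = 0} = T"
    and torsion: "\<forall>t\<in>T. \<exists>n>0. nmul n t = 0"
    and bal: "balanced T"
    and lift_y: "\<And>a. \<phi> (g a) = yv a"
    and lift_x: "\<And>n. \<phi> (xt n) = xv n"
    and fin: "\<forall>a. \<exists>t\<in>T. finite {n. \<eta> a n \<and> \<not> divisible_by (p n) (g a - t - xt n)}"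
  shows "\<exists>\<psi> :: (nat + 'k \<Rightarrow> rat) \<Rightarrow> 'g.
           (\<forall>u\<in>Hgrp \<eta> p. \<forall>v\<in>Hgrp \<eta> p. \<psi> (u + v) = \<psi> u + \<psi> v) \<and>
           (\<forall>u\<in>Hgrp \<eta> p. \<phi> (\<psi> u) = u)"
proof -
  \<comment> \<open>The hypotheses kappa and bal describe the setting of the paper; the splitting does not need them.\<close>
  have "inj p"
    using incr by (rule strict_mono_imp_inj_on)
  interpret \<phi>: additive \<phi>
    by unfold_locales (rule hom)
  have frac: "\<And>a n. \<eta> a n \<Longrightarrow> hgen_val p (GenZ a n) \<in> range \<phi>"
    using onto Hgrp.gen_frac by simp
  have "\<exists>t\<in>T. \<forall>n. \<eta> a n \<longrightarrow> divisible_by (p n) (g a - t - xt n)" for a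
  proof -
    obtain t0 where "t0 \<in> T" and "finite {n. \<eta> a n \<and> \<not> divisible_by (p n) (g a - t0 - xt n)}"
      using fin by blast
    then show ?thesis
      by (intro exists_divisible_lift[OF \<phi>.additive_axioms kernel torsion primes \<open>inj p\<close> frac lift_y lift_x])
  qed
  then obtain t where "\<And>a. t a \<in> T" and "\<And>a n. \<eta> a n \<Longrightarrow> divisible_by (p n) (g a - t a - xt n)"
    by metis
  moreover have "\<phi> (g a - t a) = yv a" for a
    using kernel \<open>t a \<in> T\<close> by (auto simp: \<phi>.diff lift_y)
  ultimately show ?thesis
    by (intro Hgrp_splits_if_divisible[OF primes \<open>inj p\<close> \<phi>.additive_axioms lift_x, of "\<lambda>a. g a - t a"])
qed

end
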